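(* Let $n\ge m$, $\mu>0$ and let $\varphi:\Delta^m\to\Omega_1[m,n]$, $\varphi(z_1,\dots,z_m)=\operatorname{diag}(z_1,\dots,z_m)$ (the $m\times n$ matrix whose $(j,j)$ entry is $z_j$ for $j\le m$ and all other entries are $0$). Then $f:M_{\Delta^m}(\mu)\to M_{\Omega_1[m,n]}(\mu)$, $f(z,w)=(\varphi(z),w)$, is a totally geodesic Kähler immersion.
   Context: $\Omega_1[m,n]=\{Z\in M_{m,n}(\mathbb C): I_m-ZZ^*>0\}$ with generic norm $N(Z,Z)=\det(I_m-ZZ^* )$; $\Delta^m$ is the unit polydisk with $N_{\Delta^m}(z,z)=\prod_j(1-|z_j|^2)$. For a domain $\Omega$ with generic norm $N_\Omega$ and $\mu>0$: $M_\Omega(\mu)=\{(z,w)\in\Omega\times\mathbb C:|w|^2<N_\Omega^\mu(z,z)\}$ with Kähler metric $\omega(\mu)=\frac i2\partial\bar\partial(-\log(N_\Omega^\mu(z,z)-|w|^2))$. A Kähler immersion is a holomorphic map pulling back the target metric to the source metric; totally geodesic means geodesics of the image submanifold are geodesics of the ambient space. *)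

theory Defs
  imports "HOL-Analysis.Analysis"
begin

definition dd :: "('a::real_normed_vector \<Rightarrow> real) \<Rightarrow> 'a \<Rightarrow> 'a \<Rightarrow> real" where
  "dd \<Phi> p u = deriv (\<lambda>t. \<Phi> (p + t *\<^sub>R u)) 0"

definition dd2 :: "('a::real_normed_vector \<Rightarrow> real) \<Rightarrow> 'a \<Rightarrow> 'a \<Rightarrow> 'a \<Rightarrow> real" where
  "dd2 \<Phi> p u v = deriv (\<lambda>s. dd \<Phi> (p + s *\<^sub>R v) u) 0"

text \<open>Riemannian metric (real part of the Hermitian metric sum g_{j kbar} u_j conj v_k,
  g_{j kbar} = d^2 Phi / dz_j d zbar_k) of the Kaehler form (i/2) ddbar Phi;
  J is multiplication by i on the coordinate space.\<close>
definition kmetric :: "('a::real_normed_vector \<Rightarrow> 'a) \<Rightarrow> ('a \<Rightarrow> real) \<Rightarrow> 'a \<Rightarrow> 'a \<Rightarrow> 'a \<Rightarrow> real" where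
  "kmetric J \<Phi> p u v = (dd2 \<Phi> p u v + dd2 \<Phi> p (J u) (J v)) / 4"

definition pullback_metric ::
  "('b::real_normed_vector \<Rightarrow> 'b \<Rightarrow> 'b \<Rightarrow> real) \<Rightarrow> ('a::real_normed_vector \<Rightarrow> 'b) \<Rightarrow> 'a \<Rightarrow> 'a \<Rightarrow> 'a \<Rightarrow> real" where
  "pullback_metric G f p u v =
     G (f p) (frechet_derivative f (at p) u) (frechet_derivative f (at p) v)"

text \<open>Geodesic equation (with lowered index):
  g(gamma'', w) + (d/ds g_{gamma(s)})(gamma', w) - 1/2 (D_w g)(gamma', gamma') = 0 for all w.\<close>
definition geodesic ::
  "'a::real_normed_vector set \<Rightarrow> ('a \<Rightarrow> 'a \<Rightarrow> 'a \<Rightarrow> real) \<Rightarrow> real \<Rightarrow> real \<Rightarrow> (real \<Rightarrow> 'a) \<Rightarrow> bool" where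
  "geodesic S G a b \<gamma> \<longleftrightarrow>
     (\<forall>t\<in>{a<..<b}.
        \<gamma> t \<in> S \<and> \<gamma> differentiable (at t) \<and>
        (\<lambda>s. vector_derivative \<gamma> (at s)) differentiable (at t) \<and>
        (\<forall>w. G (\<gamma> t) (vector_derivative (\<lambda>s. vector_derivative \<gamma> (at s)) (at t)) w
              + deriv (\<lambda>s. G (\<gamma> s) (vector_derivative \<gamma> (at t)) w) t
              - dd (\<lambda>p. G p (vector_derivative \<gamma> (at t)) (vector_derivative \<gamma> (at t))) (\<gamma> t) w / 2
              = 0))"

definition holomorphic_map ::
  "('a::real_normed_vector \<Rightarrow> 'a) \<Rightarrow> ('b::real_normed_vector \<Rightarrow> 'b) \<Rightarrow> 'a set \<Rightarrow> ('a \<Rightarrow> 'b) \<Rightarrow> bool" where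
  "holomorphic_map J J' S f \<longleftrightarrow>
     (\<forall>p\<in>S. \<exists>f'. (f has_derivative f') (at p) \<and> (\<forall>u. f' (J u) = J' (f' u)))"

definition kahler_immersion ::
  "('a::real_normed_vector \<Rightarrow> 'a) \<Rightarrow> 'a set \<Rightarrow> ('a \<Rightarrow> real) \<Rightarrow>
   ('b::real_normed_vector \<Rightarrow> 'b) \<Rightarrow> 'b set \<Rightarrow> ('b \<Rightarrow> real) \<Rightarrow> ('a \<Rightarrow> 'b) \<Rightarrow> bool" where
  "kahler_immersion J S \<Phi> J' S' \<Phi>' f \<longleftrightarrow>
     f ` S \<subseteq> S' \<and> holomorphic_map J J' S f \<and>
     (\<forall>p\<in>S. \<forall>u v. pullback_metric (kmetric J' \<Phi>') f p u v = kmetric J \<Phi> p u v)"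

text \<open>Totally geodesic: geodesics of the image submanifold f(S) (with induced metric,
  i.e. geodesics of the pulled back metric transported by f) are geodesics of the ambient space.\<close>
definition totally_geodesic ::
  "'a::real_normed_vector set \<Rightarrow> ('b::real_normed_vector \<Rightarrow> 'b) \<Rightarrow> 'b set \<Rightarrow> ('b \<Rightarrow> real) \<Rightarrow> ('a \<Rightarrow> 'b) \<Rightarrow> bool" where
  "totally_geodesic S J' S' \<Phi>' f \<longleftrightarrow>
     (\<forall>a b \<gamma>. geodesic S (pullback_metric (kmetric J' \<Phi>') f) a b \<gamma> \<longrightarrow>
              geodesic S' (kmetric J' \<Phi>') a b (f \<circ> \<gamma>))"

definition J_poly :: "(complex^'m) \<times> complex \<Rightarrow> (complex^'m) \<times> complex" where
  "J_poly x = ((\<chi> j. \<i> * fst x $ j), \<i> * snd x)"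

definition J_mat :: "(complex^'n^'m) \<times> complex \<Rightarrow> (complex^'n^'m) \<times> complex" where
  "J_mat x = ((\<chi> i j. \<i> * fst x $ i $ j), \<i> * snd x)"

definition polydisk :: "(complex^'m) set" where
  "polydisk = {z. \<forall>j. cmod (z $ j) < 1}"

definition N_poly :: "complex^'m \<Rightarrow> real" where
  "N_poly z = (\<Prod>j\<in>UNIV. 1 - (cmod (z $ j))\<^sup>2)"

definition conj_transpose :: "complex^'n^'m \<Rightarrow> complex^'m^'n" where
  "conj_transpose Z = (\<chi> i j. cnj (Z $ j $ i))"

definition pos_def_herm :: "complex^'m^'m \<Rightarrow> bool" where
  "pos_def_herm A \<longleftrightarrow> (\<forall>i j. A $ i $ j = cnj (A $ j $ i)) \<and>
     (\<forall>v. v \<noteq> 0 \<longrightarrow> 0 < Re (\<Sum>i\<in>UNIV. \<Sum>j\<in>UNIV. cnj (v $ i) * A $ i $ j * v $ j))"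

definition Omega1 :: "(complex^'n^'m) set" where
  "Omega1 = {Z. pos_def_herm (mat 1 - Z ** conj_transpose Z)}"

definition N_Omega1 :: "complex^'n^'m \<Rightarrow> real" where
  "N_Omega1 Z = Re (det (mat 1 - Z ** conj_transpose Z))"

definition hartogs :: "'a set \<Rightarrow> ('a \<Rightarrow> real) \<Rightarrow> real \<Rightarrow> ('a \<times> complex) set" where
  "hartogs \<Omega> N \<mu> = {(z, w). z \<in> \<Omega> \<and> (cmod w)\<^sup>2 < N z powr \<mu>}"

definition hartogs_pot :: "('a \<Rightarrow> real) \<Rightarrow> real \<Rightarrow> 'a \<times> complex \<Rightarrow> real" where
  "hartogs_pot N \<mu> x = - ln (N (fst x) powr \<mu> - (cmod (snd x))\<^sup>2)"

text \<open>diag(z_1,...,z_m) as an m x n matrix; the injection iota : rows -> columns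
  fixes which column plays the role of the j-th column (entry (j, iota j) is z_j).\<close>
definition diag_emb :: "('m \<Rightarrow> 'n) \<Rightarrow> complex^'m \<Rightarrow> complex^'n^'m" where
  "diag_emb \<iota> z = (\<chi> i k. if k = \<iota> i then z $ i else 0)"

definition f_map :: "('m \<Rightarrow> 'n) \<Rightarrow> (complex^'m) \<times> complex \<Rightarrow> (complex^'n^'m) \<times> complex" where
  "f_map \<iota> x = (diag_emb \<iota> (fst x), snd x)"

end

theory Submission
  imports Defs
begin

text \<open>The diagonal embedding \<open>f\<close> is complex linear and satisfies
  \<open>N\<^sub>\<Omega>\<^sub>1(\<phi>(z)) = N\<^sub>\<Delta>(z)\<close>, so the potential of \<open>M\<^sub>\<Omega>\<^sub>1(\<mu>)\<close>
  pulls back to that of \<open>M\<^sub>\<Delta>(\<mu>)\<close>; hence \<open>f\<close> is a Kaehler immersion.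
  For a geodesic \<open>\<gamma>\<close> of the induced metric, the geodesic equation of \<open>f \<circ> \<gamma>\<close> tested
  against a tangent vector \<open>w\<close> is linear in \<open>w\<close> and vanishes on the image of \<open>f\<close>.
  Changing the sign of row \<open>i\<close> and of column \<open>\<iota> i\<close> is an isometry of
  \<open>M\<^sub>\<Omega>\<^sub>1(\<mu>)\<close> that fixes the image of \<open>f\<close> and negates the off-diagonal entries
  of row \<open>i\<close>, so the geodesic equation vanishes on those entries as well; together with
  the image of \<open>f\<close> they span the whole tangent space.\<close>

section \<open>Calculus of directional derivatives and \<open>C\<^sup>k\<close> functions\<close>

definition Df :: "('a::real_normed_vector \<Rightarrow> real) \<Rightarrow> 'a \<Rightarrow> 'a \<Rightarrow> real" where
  "Df f x = frechet_derivative f (at x)"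

lemma has_derivative_Df: "f differentiable (at x) \<Longrightarrow> (f has_derivative Df f x) (at x)"
  by (simp add: Df_def frechet_derivative_works)

lemma Df_eqI: "(f has_derivative f') (at x) \<Longrightarrow> Df f x = f'"
  unfolding Df_def by (rule frechet_derivative_at[symmetric])

lemma linear_Df: "f differentiable (at x) \<Longrightarrow> linear (Df f x)"
  using has_derivative_Df has_derivative_linear by blast

lemma Df_transform_open:
  assumes "open U" "x \<in> U" "\<And>y. y \<in> U \<Longrightarrow> f y = g y" "f differentiable (at x)"
  shows "g differentiable (at x) \<and> Df g x = Df f x"
proof -
  have "(g has_derivative Df f x) (at x)"
    using has_derivative_transform_within_open[OF has_derivative_Df[OF assms(4)] assms(1,2)] assms(3)
    by blast
  then show ?thesis
    using Df_eqI differentiable_def by metis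
qed

lemma Df_add:
  assumes "f differentiable (at x)" "g differentiable (at x)"
  shows "(\<lambda>y. f y + g y) differentiable (at x) \<and> Df (\<lambda>y. f y + g y) x = (\<lambda>w. Df f x w + Df g x w)"
proof -
  have "((\<lambda>y. f y + g y) has_derivative (\<lambda>w. Df f x w + Df g x w)) (at x)"
    using assms by (intro has_derivative_add has_derivative_Df)
  then show ?thesis
    using Df_eqI differentiable_def by metis
qed

lemma Df_mult:
  assumes "f differentiable (at x)" "g differentiable (at x)"
  shows "(\<lambda>y. f y * g y) differentiable (at x) \<and>
    Df (\<lambda>y. f y * g y) x = (\<lambda>w. f x * Df g x w + Df f x w * g x)"
proof -
  have "((\<lambda>y. f y * g y) has_derivative (\<lambda>w. f x * Df g x w + Df f x w * g x)) (at x)"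
    using assms by (intro has_derivative_mult has_derivative_Df)
  then show ?thesis
    using Df_eqI differentiable_def by metis
qed

lemma Df_cmult:
  assumes "f differentiable (at x)"
  shows "(\<lambda>y. c * f y) differentiable (at x) \<and> Df (\<lambda>y. c * f y) x = (\<lambda>w. c * Df f x w)"
proof -
  have "((\<lambda>y. c * f y) has_derivative (\<lambda>w. c * Df f x w)) (at x)"
    using assms by (intro has_derivative_mult_right has_derivative_Df)
  then show ?thesis
    using Df_eqI differentiable_def by metis
qed

lemma Df_compose_real:
  assumes "g differentiable (at x)" "(h has_real_derivative h') (at (g x))"
  shows "(\<lambda>y. h (g y)) differentiable (at x) \<and> Df (\<lambda>y. h (g y)) x = (\<lambda>w. h' * Df g x w)"
proof -
  have "((\<lambda>y. h (g y)) has_derivative (\<lambda>w. h' * Df g x w)) (at x)"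
    using has_derivative_compose[OF has_derivative_Df[OF assms(1)]
        has_field_derivative_imp_has_derivative[OF assms(2)]]
    by (simp add: mult.commute)
  then show ?thesis
    using Df_eqI differentiable_def by metis
qed

lemma deriv_compose_Df:
  assumes "K differentiable (at (\<gamma> t))" "(\<gamma> has_vector_derivative V) (at t)"
  shows "deriv (\<lambda>s. K (\<gamma> s)) t = Df K (\<gamma> t) V"
proof -
  have "((\<lambda>s. K (\<gamma> s)) has_derivative (\<lambda>h. Df K (\<gamma> t) (h *\<^sub>R V))) (at t)"
    using has_derivative_compose[OF assms(2)[unfolded has_vector_derivative_def]
        has_derivative_Df[OF assms(1)]] .
  moreover have "(\<lambda>h. Df K (\<gamma> t) (h *\<^sub>R V)) = (*) (Df K (\<gamma> t) V)"
    using linear_scale[OF linear_Df[OF assms(1)]] by (auto simp: fun_eq_iff)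
  ultimately have "((\<lambda>s. K (\<gamma> s)) has_field_derivative Df K (\<gamma> t) V) (at t)"
    by (simp add: has_field_derivative_def)
  then show ?thesis
    by (rule DERIV_imp_deriv)
qed

lemma dd_eq_Df:
  assumes "f differentiable (at x)"
  shows "dd f x u = Df f x u"
proof -
  have "((\<lambda>s. x + s *\<^sub>R u) has_vector_derivative u) (at 0)"
    by (auto intro!: derivative_eq_intros)
  then show ?thesis
    unfolding dd_def using deriv_compose_Df[of f "\<lambda>s. x + s *\<^sub>R u" 0 u] assms by simp
qed

lemma linear_Df_param:
  assumes U: "open U" "p \<in> U" and lin: "\<And>y. y \<in> U \<Longrightarrow> linear (F y)"
    and diff: "\<And>b. (\<lambda>y. F y b) differentiable (at p)"
  shows "linear (\<lambda>b. Df (\<lambda>y. F y b) p c)"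
proof (rule linearI)
  fix b1 b2
  have "\<And>y. y \<in> U \<Longrightarrow> F y b1 + F y b2 = F y (b1 + b2)"
    using lin by (simp add: linear_add)
  from Df_transform_open[OF U this Df_add[OF diff diff, THEN conjunct1]]
  have "Df (\<lambda>y. F y (b1 + b2)) p = Df (\<lambda>y. F y b1 + F y b2) p"
    by (rule conjunct2)
  then show "Df (\<lambda>y. F y (b1 + b2)) p c = Df (\<lambda>y. F y b1) p c + Df (\<lambda>y. F y b2) p c"
    using Df_add[OF diff diff] by simp
next
  fix r b
  have "\<And>y. y \<in> U \<Longrightarrow> r * F y b = F y (r *\<^sub>R b)"
    using lin by (simp add: linear_scale)
  from Df_transform_open[OF U this Df_cmult[OF diff, THEN conjunct1]]
  have "Df (\<lambda>y. F y (r *\<^sub>R b)) p = Df (\<lambda>y. r * F y b) p"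
    by (rule conjunct2)
  then show "Df (\<lambda>y. F y (r *\<^sub>R b)) p c = r *\<^sub>R Df (\<lambda>y. F y b) p c"
    using Df_cmult[OF diff] by simp
qed

fun Ck :: "nat \<Rightarrow> 'a::real_normed_vector set \<Rightarrow> ('a \<Rightarrow> real) \<Rightarrow> bool" where
  "Ck 0 U f = True"
| "Ck (Suc k) U f \<longleftrightarrow> (\<forall>x\<in>U. f differentiable (at x)) \<and> (\<forall>w. Ck k U (\<lambda>x. Df f x w))"

lemma Ck_Suc_imp_Ck: "Ck (Suc k) U f \<Longrightarrow> Ck k U f"
  by (induction k arbitrary: f) auto

lemma Ck_cong:
  "open U \<Longrightarrow> (\<And>x. x \<in> U \<Longrightarrow> f x = g x) \<Longrightarrow> Ck k U f \<Longrightarrow> Ck k U g"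
proof (induction k arbitrary: f g)
  case (Suc k)
  have d: "\<And>x. x \<in> U \<Longrightarrow> g differentiable (at x) \<and> Df g x = Df f x"
    using Df_transform_open[OF Suc.prems(1) _ Suc.prems(2)] Suc.prems(3) by auto
  have "Ck k U (\<lambda>x. Df g x w)" for w
    using Suc.IH[OF Suc.prems(1), of "\<lambda>x. Df f x w"] Suc.prems(3) d by auto
  then show ?case
    using d by simp
qed simp

lemma Ck_SucI:
  assumes "open U" "\<And>x. x \<in> U \<Longrightarrow> f differentiable (at x) \<and> Df f x = D x"
    "\<And>w. Ck k U (\<lambda>x. D x w)"
  shows "Ck (Suc k) U f"
proof -
  have "Ck k U (\<lambda>x. Df f x w)" for w
    using Ck_cong[OF assms(1) _ assms(3)[of w]] assms(2) by simp
  then show ?thesis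
    using assms(2) by simp
qed

lemma Ck_const: "open U \<Longrightarrow> Ck k U (\<lambda>x. c)"
proof (induction k arbitrary: c)
  case (Suc k)
  show ?case
    by (rule Ck_SucI[OF Suc.prems, where D="\<lambda>x w. 0"]) (simp_all add: Df_eqI Suc)
qed simp

lemma Ck_bounded_linear: "open U \<Longrightarrow> bounded_linear l \<Longrightarrow> Ck k U l"
proof (cases k)
  case (Suc j)
  assume "open U" "bounded_linear l"
  then show ?thesis
    unfolding Suc
    by (intro Ck_SucI[where D="\<lambda>x. l"])
       (simp_all add: Df_eqI bounded_linear_imp_has_derivative bounded_linear_imp_differentiable Ck_const)
qed simp

lemma Ck_add:
  assumes "open U"
  shows "Ck k U f \<Longrightarrow> Ck k U g \<Longrightarrow> Ck k U (\<lambda>x. f x + g x)"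
proof (induction k arbitrary: f g)
  case (Suc k)
  show ?case
  proof (rule Ck_SucI[OF assms, where D="\<lambda>x w. Df f x w + Df g x w"])
    fix x
    assume "x \<in> U"
    then show "(\<lambda>x. f x + g x) differentiable (at x) \<and>
        Df (\<lambda>x. f x + g x) x = (\<lambda>w. Df f x w + Df g x w)"
      using Suc.prems by (intro Df_add) auto
  qed (use Suc in auto)
qed simp

lemma Ck_mult:
  assumes "open U"
  shows "Ck k U f \<Longrightarrow> Ck k U g \<Longrightarrow> Ck k U (\<lambda>x. f x * g x)"
proof (induction k arbitrary: f g)
  case (Suc k)
  then have "Ck k U f" "Ck k U g"
    using Ck_Suc_imp_Ck by blast+
  show ?case
  proof (rule Ck_SucI[OF assms, where D="\<lambda>x w. f x * Df g x w + Df f x w * g x"])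
    fix x
    assume "x \<in> U"
    then show "(\<lambda>x. f x * g x) differentiable (at x) \<and>
        Df (\<lambda>x. f x * g x) x = (\<lambda>w. f x * Df g x w + Df f x w * g x)"
      using Suc.prems by (intro Df_mult) auto
  next
    fix w
    show "Ck k U (\<lambda>x. f x * Df g x w + Df f x w * g x)"
      using Suc \<open>Ck k U f\<close> \<open>Ck k U g\<close> by (intro Ck_add[OF assms]) auto
  qed
qed simp

lemma Ck_cmult: "open U \<Longrightarrow> Ck k U f \<Longrightarrow> Ck k U (\<lambda>x. c * f x)"
  using Ck_mult[OF _ Ck_const] by blast

lemma Ck_diff: "open U \<Longrightarrow> Ck k U f \<Longrightarrow> Ck k U g \<Longrightarrow> Ck k U (\<lambda>x. f x - g x)"
  using Ck_add[of U k f "\<lambda>x. (-1) * g x"] Ck_cmult[of U k g "-1"] by simp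

lemma Ck_compose_derivative_tower:
  assumes "open U" "\<And>j y. y \<in> I \<Longrightarrow> (hs j has_real_derivative hs (Suc j) y) (at y)"
    "\<And>x. x \<in> U \<Longrightarrow> g x \<in> I"
  shows "Ck k U g \<Longrightarrow> Ck k U (\<lambda>x. hs j (g x))"
proof (induction k arbitrary: j)
  case (Suc k)
  then have "Ck k U g"
    using Ck_Suc_imp_Ck by blast
  show ?case
  proof (rule Ck_SucI[OF assms(1), where D="\<lambda>x w. hs (Suc j) (g x) * Df g x w"])
    fix x
    assume "x \<in> U"
    then show "(\<lambda>x. hs j (g x)) differentiable (at x) \<and>
        Df (\<lambda>x. hs j (g x)) x = (\<lambda>w. hs (Suc j) (g x) * Df g x w)"
      using Suc.prems assms(3) by (intro Df_compose_real assms(2)) auto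
  next
    fix w
    show "Ck k U (\<lambda>x. hs (Suc j) (g x) * Df g x w)"
      using Suc \<open>Ck k U g\<close> by (intro Ck_mult[OF assms(1)]) auto
  qed
qed simp

lemma continuous_on_if_Ck_Suc: "Ck (Suc k) U f \<Longrightarrow> continuous_on U f"
  unfolding differentiable_on_def
  by (auto intro!: differentiable_imp_continuous_on simp: differentiable_on_def differentiable_at_withinI)

section \<open>Kaehler metrics and the geodesic equation\<close>

lemma dd2_eq_Df_Df:
  assumes U: "open U" "x \<in> U" and d: "\<And>y. y \<in> U \<Longrightarrow> \<Phi> differentiable (at y)"
    and d2: "(\<lambda>y. Df \<Phi> y u) differentiable (at x)"
  shows "dd2 \<Phi> x u v = Df (\<lambda>y. Df \<Phi> y u) x v"
proof -
  have "isCont (\<lambda>s. x + s *\<^sub>R v) 0"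
    by (intro continuous_intros)
  then obtain S where "open S" "0 \<in> S" "\<forall>s\<in>S. x + s *\<^sub>R v \<in> U"
    using U continuous_at_open[of 0 "\<lambda>s. x + s *\<^sub>R v"] by auto
  then have "eventually (\<lambda>s. dd \<Phi> (x + s *\<^sub>R v) u = Df \<Phi> (x + s *\<^sub>R v) u) (nhds 0)"
    unfolding eventually_nhds using dd_eq_Df d by blast
  then have "dd2 \<Phi> x u v = deriv (\<lambda>s. Df \<Phi> (x + s *\<^sub>R v) u) 0"
    unfolding dd2_def by (rule deriv_cong_ev) simp
  also have "\<dots> = Df (\<lambda>y. Df \<Phi> y u) x v"
    using dd_eq_Df[OF d2] by (simp add: dd_def)
  finally show ?thesis .
qed

lemma kmetric_eq_Df_Df:
  assumes "open U" "Ck 2 U \<Phi>" "p \<in> U"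
  shows "kmetric J \<Phi> p u v = (Df (\<lambda>y. Df \<Phi> y u) p v + Df (\<lambda>y. Df \<Phi> y (J u)) p (J v)) / 4"
  using assms by (simp add: kmetric_def dd2_eq_Df_Df numeral_2_eq_2)

lemma linear_kmetric:
  assumes "open U" "Ck 2 U \<Phi>" "linear J" "p \<in> U"
  shows "linear (kmetric J \<Phi> p u)"
proof -
  have D2: "linear (Df (\<lambda>y. Df \<Phi> y a) p)" for a
    using assms by (intro linear_Df) (simp add: numeral_2_eq_2)
  show ?thesis
    by (rule linearI)
       (simp_all add: kmetric_eq_Df_Df[OF assms(1,2,4)] linear_add[OF D2] linear_scale[OF D2]
         linear_add[OF assms(3)] linear_scale[OF assms(3)] field_simps)
qed

lemma differentiable_kmetric:
  assumes "open U" "Ck 3 U \<Phi>" "p \<in> U"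
  shows "(\<lambda>y. kmetric J \<Phi> y u v) differentiable (at p)"
proof -
  have "(\<lambda>y. Df (\<lambda>z. Df \<Phi> z a) y b) differentiable (at p)" for a b
    using assms by (simp add: numeral_3_eq_3)
  then have "(\<lambda>y. (Df (\<lambda>z. Df \<Phi> z u) y v + Df (\<lambda>z. Df \<Phi> z (J u)) y (J v)) / 4)
      differentiable (at p)"
    by (intro derivative_intros) simp_all
  moreover have "Ck 2 U \<Phi>"
    using assms(2) Ck_Suc_imp_Ck by (simp add: numeral_3_eq_3 numeral_2_eq_2)
  ultimately show ?thesis
    using Df_transform_open[OF assms(1,3)] kmetric_eq_Df_Df[OF assms(1)] by (metis (no_types, lifting))
qed

definition geodesic_residual ::
  "('a::real_normed_vector \<Rightarrow> 'a \<Rightarrow> 'a \<Rightarrow> real) \<Rightarrow> (real \<Rightarrow> 'a) \<Rightarrow> real \<Rightarrow> 'a \<Rightarrow> real" where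
  "geodesic_residual G \<gamma> t w =
     G (\<gamma> t) (vector_derivative (\<lambda>s. vector_derivative \<gamma> (at s)) (at t)) w
     + deriv (\<lambda>s. G (\<gamma> s) (vector_derivative \<gamma> (at t)) w) t
     - dd (\<lambda>p. G p (vector_derivative \<gamma> (at t)) (vector_derivative \<gamma> (at t))) (\<gamma> t) w / 2"

lemma geodesic_iff_residual:
  "geodesic S G a b \<gamma> \<longleftrightarrow>
     (\<forall>t\<in>{a<..<b}. \<gamma> t \<in> S \<and> \<gamma> differentiable (at t) \<and>
        (\<lambda>s. vector_derivative \<gamma> (at s)) differentiable (at t) \<and>
        (\<forall>w. geodesic_residual G \<gamma> t w = 0))"
  unfolding geodesic_def geodesic_residual_def ..

lemma linear_geodesic_residual:
  assumes U: "open U" "Ck 3 U \<Phi>" and J: "linear J"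
    and \<gamma>: "\<gamma> differentiable (at t)" "\<gamma> t \<in> U"
  shows "linear (geodesic_residual (kmetric J \<Phi>) \<gamma> t)"
proof -
  define V where "V = vector_derivative \<gamma> (at t)"
  define A where "A = vector_derivative (\<lambda>s. vector_derivative \<gamma> (at s)) (at t)"
  have C2: "Ck 2 U \<Phi>"
    using U(2) Ck_Suc_imp_Ck by (simp add: numeral_3_eq_3 numeral_2_eq_2)
  have V: "(\<gamma> has_vector_derivative V) (at t)"
    using \<gamma>(1) V_def vector_derivative_works by blast
  have residual: "geodesic_residual (kmetric J \<Phi>) \<gamma> t =
      (\<lambda>w. kmetric J \<Phi> (\<gamma> t) A w + Df (\<lambda>p. kmetric J \<Phi> p V w) (\<gamma> t) V
        - Df (\<lambda>p. kmetric J \<Phi> p V V) (\<gamma> t) w / 2)"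
    unfolding geodesic_residual_def A_def[symmetric] V_def[symmetric]
    using deriv_compose_Df[OF differentiable_kmetric[OF U \<gamma>(2)] V]
      dd_eq_Df[OF differentiable_kmetric[OF U \<gamma>(2)]] by simp
  have "linear (\<lambda>w. Df (\<lambda>p. kmetric J \<Phi> p V w) (\<gamma> t) V)"
    by (intro linear_Df_param[OF U(1) \<gamma>(2)])
       (simp_all add: linear_kmetric[OF U(1) C2 J] differentiable_kmetric[OF U \<gamma>(2)])
  moreover have "linear (\<lambda>w. Df (\<lambda>p. kmetric J \<Phi> p V V) (\<gamma> t) w / 2)"
    using linear_Df[OF differentiable_kmetric[OF U \<gamma>(2)]]
    by (intro linearI) (simp_all add: linear_add linear_scale add_divide_distrib)
  ultimately show ?thesis
    unfolding residual
    by (intro linear_compose_sub linear_compose_add linear_kmetric[OF U(1) C2 J \<gamma>(2)])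
qed

lemma dd_linear_image:
  assumes "linear f" "\<And>x. H' (f x) = H x"
  shows "dd H' (f p) (f w) = dd H p w"
  unfolding dd_def using assms by (simp add: linear_add linear_scale flip: assms(2))

lemma dd2_linear_image:
  assumes "linear f" "\<And>x. H' (f x) = H x"
  shows "dd2 H' (f p) (f u) (f v) = dd2 H p u v"
proof -
  have "f p + s *\<^sub>R f v = f (p + s *\<^sub>R v)" for s
    using assms(1) by (simp add: linear_add linear_scale)
  then show ?thesis
    unfolding dd2_def using dd_linear_image[of f H' H, OF assms] by simp
qed

lemma kmetric_linear_image:
  assumes "linear f" "\<And>x. H' (f x) = H x" "\<And>u. J' (f u) = f (J u)"
  shows "kmetric J' H' (f p) (f u) (f v) = kmetric J H p u v"
  unfolding kmetric_def using dd2_linear_image[of f H' H, OF assms(1,2)] assms(3) by simp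

lemma pullback_metric_linear:
  "bounded_linear f \<Longrightarrow> pullback_metric G f p u v = G (f p) (f u) (f v)"
  unfolding pullback_metric_def
  using frechet_derivative_at[OF bounded_linear_imp_has_derivative] by metis

lemma kahler_immersion_linear:
  assumes f: "bounded_linear f" and "f ` S \<subseteq> S'"
    and "\<And>u. J' (f u) = f (J u)" "\<And>x. \<Phi>' (f x) = \<Phi> x"
  shows "kahler_immersion J S \<Phi> J' S' \<Phi>' f"
  unfolding kahler_immersion_def holomorphic_map_def pullback_metric_linear[OF f]
  using assms bounded_linear_imp_has_derivative[OF f] kmetric_linear_image[of f \<Phi>' \<Phi>]
    bounded_linear.linear[OF f]
  by metis

section \<open>A criterion for total geodesy\<close>

lemma velocity_linear_image:
  assumes "bounded_linear f" "\<gamma> differentiable (at s)"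
  shows "((f \<circ> \<gamma>) has_vector_derivative f (vector_derivative \<gamma> (at s))) (at s)"
  unfolding comp_def
  using bounded_linear.has_vector_derivative[OF assms(1)] assms(2) vector_derivative_works by blast

lemma acceleration_linear_image:
  assumes f: "bounded_linear f" and I: "open I" "t \<in> I"
    and \<gamma>: "\<And>s. s \<in> I \<Longrightarrow> \<gamma> differentiable (at s)"
      "(\<lambda>s. vector_derivative \<gamma> (at s)) differentiable (at t)"
  shows "((\<lambda>s. vector_derivative (f \<circ> \<gamma>) (at s)) has_vector_derivative
           f (vector_derivative (\<lambda>s. vector_derivative \<gamma> (at s)) (at t))) (at t)"
proof (rule has_vector_derivative_transform_within_open[OF _ I])
  show "((\<lambda>s. f (vector_derivative \<gamma> (at s))) has_vector_derivative
          f (vector_derivative (\<lambda>s. vector_derivative \<gamma> (at s)) (at t))) (at t)"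
    using bounded_linear.has_vector_derivative[OF f] \<gamma>(2) vector_derivative_works by blast
  show "f (vector_derivative \<gamma> (at s)) = vector_derivative (f \<circ> \<gamma>) (at s)" if "s \<in> I" for s
    using vector_derivative_at[OF velocity_linear_image[OF f \<gamma>(1)[OF that]]] by simp
qed

lemma geodesic_residual_linear_image:
  assumes f: "bounded_linear f" and I: "open I" "t \<in> I"
    and \<gamma>: "\<And>s. s \<in> I \<Longrightarrow> \<gamma> differentiable (at s)"
      "(\<lambda>s. vector_derivative \<gamma> (at s)) differentiable (at t)"
  shows "geodesic_residual G (f \<circ> \<gamma>) t (f w) = geodesic_residual (pullback_metric G f) \<gamma> t w"
proof -
  define V where "V = vector_derivative \<gamma> (at t)"
  have V: "vector_derivative (f \<circ> \<gamma>) (at t) = f V"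
    unfolding V_def by (rule vector_derivative_at[OF velocity_linear_image[OF f \<gamma>(1)[OF I(2)]]])
  have A: "vector_derivative (\<lambda>s. vector_derivative (f \<circ> \<gamma>) (at s)) (at t) =
      f (vector_derivative (\<lambda>s. vector_derivative \<gamma> (at s)) (at t))"
    by (rule vector_derivative_at[OF acceleration_linear_image[OF f I \<gamma>]])
  have "dd (\<lambda>q. G q (f V) (f V)) (f (\<gamma> t)) (f w) = dd (\<lambda>p. G (f p) (f V) (f V)) (\<gamma> t) w"
    by (rule dd_linear_image[OF bounded_linear.linear[OF f]]) simp
  then show ?thesis
    unfolding geodesic_residual_def V A pullback_metric_linear[OF f] V_def[symmetric] by simp
qed

lemma geodesic_residual_invariant:
  assumes \<sigma>: "linear \<sigma>" "\<And>p u v. G (\<sigma> p) (\<sigma> u) (\<sigma> v) = G p u v"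
    and fixed: "\<And>s. \<sigma> (\<gamma> s) = \<gamma> s" "\<sigma> (vector_derivative \<gamma> (at t)) = vector_derivative \<gamma> (at t)"
      "\<sigma> (vector_derivative (\<lambda>s. vector_derivative \<gamma> (at s)) (at t)) =
         vector_derivative (\<lambda>s. vector_derivative \<gamma> (at s)) (at t)"
  shows "geodesic_residual G \<gamma> t (\<sigma> x) = geodesic_residual G \<gamma> t x"
proof -
  define V where "V = vector_derivative \<gamma> (at t)"
  define A where "A = vector_derivative (\<lambda>s. vector_derivative \<gamma> (at s)) (at t)"
  have "G (\<gamma> s) u (\<sigma> x) = G (\<gamma> s) u x" if "\<sigma> u = u" for s u
    using \<sigma>(2)[of "\<gamma> s" u x] fixed(1) that by simp
  moreover have "G (\<sigma> p) V V = G p V V" for p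
    using \<sigma>(2)[of p V V] fixed(2) V_def by simp
  then have "dd (\<lambda>p. G p V V) (\<sigma> (\<gamma> t)) (\<sigma> x) = dd (\<lambda>p. G p V V) (\<gamma> t) x"
    by (intro dd_linear_image[OF \<sigma>(1)])
  ultimately show ?thesis
    unfolding geodesic_residual_def V_def[symmetric] A_def[symmetric]
    using fixed V_def A_def by simp
qed

lemma linear_eq_0_by_reflections:
  fixes E :: "'a::real_vector \<Rightarrow> real"
  assumes E: "linear E" and "finite I" and "\<And>y. E (f y) = 0"
    and "\<And>i x. i \<in> I \<Longrightarrow> E (\<sigma> i x) = E x" "\<And>i. i \<in> I \<Longrightarrow> \<sigma> i (R i) = - R i"
  shows "E (f v + (\<Sum>i\<in>I. R i)) = 0"
proof -
  have "E (R i) = 0" if "i \<in> I" for i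
  proof -
    have "E (R i) = E (- R i)"
      using assms(4,5) that by metis
    also have "\<dots> = - E (R i)"
      by (rule linear_neg[OF E])
    finally show ?thesis
      by simp
  qed
  then show ?thesis
    using assms(3) by (simp add: linear_add[OF E] linear_sum[OF E])
qed

lemma totally_geodesic_by_reflections:
  assumes f: "bounded_linear f" and img: "f ` S \<subseteq> S'" "f ` S \<subseteq> U"
    and \<Phi>': "open U" "Ck 3 U \<Phi>'" and J': "linear J'"
    and "finite I"
    and \<sigma>: "\<And>i. i \<in> I \<Longrightarrow> linear (\<sigma> i)" "\<And>i x. i \<in> I \<Longrightarrow> \<Phi>' (\<sigma> i x) = \<Phi>' x"
      "\<And>i u. i \<in> I \<Longrightarrow> J' (\<sigma> i u) = \<sigma> i (J' u)" "\<And>i y. i \<in> I \<Longrightarrow> \<sigma> i (f y) = f y"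
    and decomp: "\<And>w. w = f (P w) + (\<Sum>i\<in>I. R i w)" "\<And>i w. i \<in> I \<Longrightarrow> \<sigma> i (R i w) = - R i w"
  shows "totally_geodesic S J' S' \<Phi>' f"
  unfolding totally_geodesic_def geodesic_iff_residual
proof (intro allI impI ballI conjI)
  fix a b t and \<gamma> :: "real \<Rightarrow> 'a"
  let ?G = "kmetric J' \<Phi>'"
  assume geo: "\<forall>t\<in>{a<..<b}. \<gamma> t \<in> S \<and> \<gamma> differentiable (at t) \<and>
      (\<lambda>s. vector_derivative \<gamma> (at s)) differentiable (at t) \<and>
      (\<forall>w. geodesic_residual (pullback_metric ?G f) \<gamma> t w = 0)"
    and t: "t \<in> {a<..<b}"
  then have \<gamma>: "\<And>s. s \<in> {a<..<b} \<Longrightarrow> \<gamma> differentiable (at s)"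
    "(\<lambda>s. vector_derivative \<gamma> (at s)) differentiable (at t)" "\<gamma> t \<in> S"
    by auto
  note V = velocity_linear_image[OF f \<gamma>(1)[OF t]]
  note A = acceleration_linear_image[OF f open_greaterThanLessThan t \<gamma>(1,2)]
  show "(f \<circ> \<gamma>) t \<in> S'"
    using img \<gamma>(3) by auto
  show "(f \<circ> \<gamma>) differentiable (at t)"
    using V differentiableI_vector by blast
  show "(\<lambda>s. vector_derivative (f \<circ> \<gamma>) (at s)) differentiable (at t)"
    using A differentiableI_vector by blast
  fix w
  show "geodesic_residual ?G (f \<circ> \<gamma>) t w = 0"
  proof (subst decomp(1)[of w], rule linear_eq_0_by_reflections[OF _ \<open>finite I\<close>,
        where f=f and v="P w" and R="\<lambda>i. R i w" and \<sigma>=\<sigma>])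
    show "linear (geodesic_residual ?G (f \<circ> \<gamma>) t)"
      using V img \<gamma>(3) by (intro linear_geodesic_residual[OF \<Phi>' J']) (auto intro: differentiableI_vector)
    show "geodesic_residual ?G (f \<circ> \<gamma>) t (f y) = 0" for y
      using geo t geodesic_residual_linear_image[OF f open_greaterThanLessThan t \<gamma>(1,2)] by simp
    show "\<sigma> i (R i w) = - R i w" if "i \<in> I" for i
      using decomp(2) that .
    show "geodesic_residual ?G (f \<circ> \<gamma>) t (\<sigma> i x) = geodesic_residual ?G (f \<circ> \<gamma>) t x"
      if "i \<in> I" for i x
    proof (rule geodesic_residual_invariant[OF \<sigma>(1)[OF that]])
      show "?G (\<sigma> i p) (\<sigma> i u) (\<sigma> i v) = ?G p u v" for p u v
        using that by (intro kmetric_linear_image \<sigma>)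
    qed (use that \<sigma>(4) vector_derivative_at[OF V] vector_derivative_at[OF A] in auto)
  qed
qed

section \<open>Smoothness of the potential of \<open>M\<^sub>\<Omega>\<^sub>1(\<mu>)\<close>\<close>

definition CCk :: "nat \<Rightarrow> 'a::real_normed_vector set \<Rightarrow> ('a \<Rightarrow> complex) \<Rightarrow> bool" where
  "CCk k U F \<longleftrightarrow> Ck k U (\<lambda>x. Re (F x)) \<and> Ck k U (\<lambda>x. Im (F x))"

lemma CCk_const: "open U \<Longrightarrow> CCk k U (\<lambda>x. c)"
  unfolding CCk_def by (simp add: Ck_const)

lemma CCk_add: "open U \<Longrightarrow> CCk k U F \<Longrightarrow> CCk k U G \<Longrightarrow> CCk k U (\<lambda>x. F x + G x)"
  unfolding CCk_def by (simp add: Ck_add)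

lemma CCk_diff: "open U \<Longrightarrow> CCk k U F \<Longrightarrow> CCk k U G \<Longrightarrow> CCk k U (\<lambda>x. F x - G x)"
  unfolding CCk_def by (simp add: Ck_diff)

lemma CCk_mult: "open U \<Longrightarrow> CCk k U F \<Longrightarrow> CCk k U G \<Longrightarrow> CCk k U (\<lambda>x. F x * G x)"
  unfolding CCk_def by (simp add: Ck_diff Ck_add Ck_mult)

lemma CCk_uminus: "open U \<Longrightarrow> CCk k U F \<Longrightarrow> CCk k U (\<lambda>x. - F x)"
  using CCk_diff[of U k "\<lambda>x. 0" F] CCk_const[of U k 0] by simp

lemma CCk_cnj: "open U \<Longrightarrow> CCk k U F \<Longrightarrow> CCk k U (\<lambda>x. cnj (F x))"
  unfolding CCk_def using Ck_cmult[of U k "\<lambda>x. Im (F x)" "-1"] by simp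

lemma CCk_sum:
  "finite A \<Longrightarrow> open U \<Longrightarrow> (\<And>a. a \<in> A \<Longrightarrow> CCk k U (F a)) \<Longrightarrow> CCk k U (\<lambda>x. \<Sum>a\<in>A. F a x)"
  by (induction A rule: finite_induct) (simp_all add: CCk_const CCk_add)

lemma CCk_prod:
  "finite A \<Longrightarrow> open U \<Longrightarrow> (\<And>a. a \<in> A \<Longrightarrow> CCk k U (F a)) \<Longrightarrow> CCk k U (\<lambda>x. \<Prod>a\<in>A. F a x)"
  by (induction A rule: finite_induct) (simp_all add: CCk_const CCk_mult)

lemma CCk_matrix_entry:
  fixes U :: "((complex^'n^'m) \<times> complex) set"
  shows "open U \<Longrightarrow> CCk k U (\<lambda>x. fst x $ i $ j)"
  unfolding CCk_def
  by (intro conjI Ck_bounded_linear bounded_linear_compose[OF bounded_linear_Re]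
      bounded_linear_compose[OF bounded_linear_Im]
      bounded_linear_compose[OF bounded_linear_vec_nth] bounded_linear_fst)

lemma Ck_N_Omega1:
  fixes U :: "((complex^'n^'m) \<times> complex) set"
  assumes "open U"
  shows "Ck k U (\<lambda>x. N_Omega1 (fst x))"
proof -
  have "CCk k U (\<lambda>x. det (mat 1 - fst x ** conj_transpose (fst x)))"
    unfolding det_def matrix_matrix_mult_def conj_transpose_def mat_def
    using assms
    by (auto intro!: CCk_sum CCk_mult CCk_prod CCk_const CCk_uminus CCk_diff CCk_cnj CCk_matrix_entry)
  then show ?thesis
    unfolding CCk_def N_Omega1_def by blast
qed

definition powr_deriv :: "real \<Rightarrow> nat \<Rightarrow> real \<Rightarrow> real" where
  "powr_deriv a j y = (\<Prod>i<j. a - real i) * y powr (a - real j)"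

lemma powr_deriv_tower:
  assumes "y \<in> {0<..}"
  shows "(powr_deriv a j has_real_derivative powr_deriv a (Suc j) y) (at y)"
proof -
  have e: "powr_deriv a (Suc j) y = (\<Prod>i<j. a - real i) * ((a - real j) * y powr (a - real j - 1))"
    unfolding powr_deriv_def prod.lessThan_Suc by (simp add: mult_ac diff_diff_add add.commute)
  show ?thesis
    unfolding e using DERIV_cmult[OF has_real_derivative_powr[of y "a - real j"], of "\<Prod>i<j. a - real i"] assms
    unfolding powr_deriv_def by simp
qed

definition ln_deriv :: "nat \<Rightarrow> real \<Rightarrow> real" where
  "ln_deriv j = (if j = 0 then ln else powr_deriv (-1) (j - 1))"

lemma ln_deriv_tower:
  assumes "y \<in> {0<..}"
  shows "(ln_deriv j has_real_derivative ln_deriv (Suc j) y) (at y)"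
proof (cases j)
  case 0
  have "(ln has_real_derivative powr_deriv (-1) 0 y) (at y)"
    using assms by (auto simp: powr_deriv_def powr_neg_one intro!: derivative_eq_intros)
  then show ?thesis
    using 0 by (simp add: ln_deriv_def)
next
  case (Suc i)
  then show ?thesis
    using powr_deriv_tower[OF assms] by (simp add: ln_deriv_def)
qed

text \<open>Only the determinant of \<open>I - Z Z\<^sup>*\<close> enters the smoothness argument, so the potential
  is treated on this open set rather than on the Hartogs domain itself.\<close>
definition Omega1_pot_domain :: "real \<Rightarrow> ((complex^'n^'m) \<times> complex) set" where
  "Omega1_pot_domain \<mu> =
     {x. 0 < N_Omega1 (fst x) \<and> 0 < N_Omega1 (fst x) powr \<mu> - (cmod (snd x))\<^sup>2}"

lemma Ck_hartogs_gap:
  fixes U :: "((complex^'n^'m) \<times> complex) set"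
  assumes U: "open U" and pos: "\<And>x. x \<in> U \<Longrightarrow> 0 < N_Omega1 (fst x)"
  shows "Ck k U (\<lambda>x. N_Omega1 (fst x) powr \<mu> - (cmod (snd x))\<^sup>2)"
proof -
  have "Ck k U (\<lambda>x. powr_deriv \<mu> 0 (N_Omega1 (fst x)))"
    using Ck_compose_derivative_tower[OF U, where I="{0<..}" and hs="powr_deriv \<mu>",
        OF powr_deriv_tower _ Ck_N_Omega1[OF U]] pos by simp
  moreover have "Ck k U (\<lambda>x. Re (snd x))" "Ck k U (\<lambda>x. Im (snd x))"
    using U by (auto intro!: Ck_bounded_linear bounded_linear_compose[OF bounded_linear_Re]
        bounded_linear_compose[OF bounded_linear_Im] bounded_linear_snd)
  ultimately have "Ck k U (\<lambda>x. powr_deriv \<mu> 0 (N_Omega1 (fst x))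
      - (Re (snd x) * Re (snd x) + Im (snd x) * Im (snd x)))"
    using U by (intro Ck_diff Ck_add Ck_mult)
  then show ?thesis
    by (rule Ck_cong[OF U, rotated])
       (simp add: powr_deriv_def cmod_power2 power2_eq_square[symmetric])
qed

lemma open_Omega1_pot_domain: "open (Omega1_pot_domain \<mu> :: ((complex^'n^'m) \<times> complex) set)"
proof -
  define U1 :: "((complex^'n^'m) \<times> complex) set" where "U1 = {x. 0 < N_Omega1 (fst x)}"
  have "continuous_on UNIV (\<lambda>x :: (complex^'n^'m) \<times> complex. N_Omega1 (fst x))"
    by (rule continuous_on_if_Ck_Suc[OF Ck_N_Omega1[of UNIV "Suc 0", OF open_UNIV]])
  then have U1: "open U1"
    unfolding U1_def by (rule open_Collect_less[OF continuous_on_const])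
  have gap: "continuous_on U1 (\<lambda>x. N_Omega1 (fst x) powr \<mu> - (cmod (snd x))\<^sup>2)"
    by (rule continuous_on_if_Ck_Suc[OF Ck_hartogs_gap[OF U1, of "Suc 0" \<mu>]]) (simp add: U1_def)
  obtain A where "open A"
    "A \<inter> U1 = {x\<in>U1. 0 < N_Omega1 (fst x) powr \<mu> - (cmod (snd x))\<^sup>2}"
    using open_Collect_less_Int[OF continuous_on_const gap, of 0] by blast
  moreover have "Omega1_pot_domain \<mu> = {x\<in>U1. 0 < N_Omega1 (fst x) powr \<mu> - (cmod (snd x))\<^sup>2}"
    unfolding Omega1_pot_domain_def U1_def by blast
  ultimately show ?thesis
    using U1 by (metis open_Int)
qed

lemma Ck_hartogs_pot_Omega1:
  "Ck k (Omega1_pot_domain \<mu>) (hartogs_pot N_Omega1 \<mu> :: (complex^'n^'m) \<times> complex \<Rightarrow> real)"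
proof -
  let ?U = "Omega1_pot_domain \<mu> :: ((complex^'n^'m) \<times> complex) set"
  have gap: "Ck k ?U (\<lambda>x. N_Omega1 (fst x) powr \<mu> - (cmod (snd x))\<^sup>2)"
    by (rule Ck_hartogs_gap[OF open_Omega1_pot_domain]) (simp add: Omega1_pot_domain_def)
  have "Ck k ?U (\<lambda>x. ln_deriv 0 (N_Omega1 (fst x) powr \<mu> - (cmod (snd x))\<^sup>2))"
    by (rule Ck_compose_derivative_tower[OF open_Omega1_pot_domain, where I="{0<..}" and hs=ln_deriv,
          OF ln_deriv_tower _ gap])
       (auto simp: Omega1_pot_domain_def)
  then have "Ck k ?U (\<lambda>x. (-1) * ln_deriv 0 (N_Omega1 (fst x) powr \<mu> - (cmod (snd x))\<^sup>2))"
    by (rule Ck_cmult[OF open_Omega1_pot_domain])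
  then show ?thesis
    by (rule Ck_cong[OF open_Omega1_pot_domain, rotated]) (simp add: ln_deriv_def hartogs_pot_def)
qed

section \<open>The diagonal embedding\<close>

lemma linear_f_map: "linear (f_map \<iota>)"
  by (rule linearI) (simp_all add: f_map_def diag_emb_def vec_eq_iff)

lemma bounded_linear_f_map: "bounded_linear (f_map \<iota>)"
  using linear_f_map linear_conv_bounded_linear by blast

lemma J_mat_f_map: "J_mat (f_map \<iota> u) = f_map \<iota> (J_poly u)"
  by (simp add: f_map_def diag_emb_def J_mat_def J_poly_def vec_eq_iff)

lemma linear_J_mat: "linear J_mat"
  by (rule linearI) (simp_all add: J_mat_def vec_eq_iff algebra_simps)

lemma mat_1_minus_diag_emb:
  assumes "inj \<iota>"
  shows "mat 1 - diag_emb \<iota> z ** conj_transpose (diag_emb \<iota> z) =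
    (\<chi> i j. if i = j then complex_of_real (1 - (cmod (z $ i))\<^sup>2) else 0)"
proof -
  have "(\<Sum>k\<in>UNIV. (if k = \<iota> i then z $ i else 0) * cnj (if k = \<iota> j then z $ j else 0))
      = (if i = j then z $ i * cnj (z $ i) else 0)" for i j
  proof -
    have "(\<Sum>k\<in>UNIV. (if k = \<iota> i then z $ i else 0) * cnj (if k = \<iota> j then z $ j else 0))
       = (\<Sum>k\<in>UNIV. if k = \<iota> i then z $ i * cnj (if \<iota> i = \<iota> j then z $ j else 0) else 0)"
      by (rule sum.cong) auto
    then show ?thesis
      using assms by (simp add: inj_eq)
  qed
  moreover have "w * cnj w = complex_of_real ((cmod w)\<^sup>2)" for w :: complex
    by (rule complex_norm_square[symmetric])
  ultimately show ?thesis
    by (simp add: vec_eq_iff matrix_matrix_mult_def conj_transpose_def diag_emb_def mat_def)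
qed

lemma N_Omega1_diag_emb:
  assumes "inj \<iota>"
  shows "N_Omega1 (diag_emb \<iota> z) = N_poly z"
proof -
  have "det (mat 1 - diag_emb \<iota> z ** conj_transpose (diag_emb \<iota> z)) =
      (\<Prod>i\<in>UNIV. complex_of_real (1 - (cmod (z $ i))\<^sup>2))"
    unfolding mat_1_minus_diag_emb[OF assms] by (subst det_diagonal) simp_all
  also have "\<dots> = complex_of_real (\<Prod>i\<in>UNIV. 1 - (cmod (z $ i))\<^sup>2)"
    by (rule of_real_prod[symmetric])
  finally show ?thesis
    unfolding N_Omega1_def N_poly_def by (simp only: Re_complex_of_real)
qed

lemma N_poly_pos: "z \<in> polydisk \<Longrightarrow> 0 < N_poly z"
  unfolding N_poly_def polydisk_def
  by (rule prod_pos) (simp add: abs_square_less_1)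

lemma diag_emb_in_Omega1:
  fixes z :: "complex^'m::finite" and \<iota> :: "'m \<Rightarrow> 'n::finite"
  assumes "inj \<iota>" "z \<in> polydisk"
  shows "diag_emb \<iota> z \<in> Omega1"
proof -
  define d where "d i = 1 - (cmod (z $ i))\<^sup>2" for i
  have d: "0 < d i" for i
    using assms(2) unfolding polydisk_def d_def by (simp add: abs_square_less_1)
  define M :: "complex^'m^'m" where "M = (\<chi> i j. if i = j then complex_of_real (d i) else 0)"
  have form: "(\<Sum>j\<in>UNIV. cnj (v $ i) * M $ i $ j * v $ j) = complex_of_real (d i * (cmod (v $ i))\<^sup>2)"
    for v i
  proof -
    have "(\<Sum>j\<in>UNIV. cnj (v $ i) * M $ i $ j * v $ j) =
        (\<Sum>j\<in>UNIV. if i = j then cnj (v $ i) * complex_of_real (d i) * v $ i else 0)"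
      by (rule sum.cong) (auto simp: M_def)
    then show ?thesis
      using complex_norm_square[of "v $ i"] by (simp add: mult_ac)
  qed
  have "0 < Re (\<Sum>i\<in>UNIV. \<Sum>j\<in>UNIV. cnj (v $ i) * M $ i $ j * v $ j)" if "v \<noteq> 0" for v
  proof -
    obtain i where "v $ i \<noteq> 0"
      using \<open>v \<noteq> 0\<close> by (auto simp: vec_eq_iff)
    then show ?thesis
      unfolding Re_sum form Re_complex_of_real
      by (intro sum_pos2[of UNIV i]) (simp_all add: d less_imp_le)
  qed
  then have "pos_def_herm M"
    unfolding pos_def_herm_def by (simp add: M_def)
  then show ?thesis
    unfolding Omega1_def M_def d_def using mat_1_minus_diag_emb[OF assms(1), of z] by simp
qed

lemma hartogs_pot_f_map:
  "inj \<iota> \<Longrightarrow> hartogs_pot N_Omega1 \<mu> (f_map \<iota> x) = hartogs_pot N_poly \<mu> x"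
  by (simp add: hartogs_pot_def f_map_def N_Omega1_diag_emb)

lemma f_map_hartogs:
  assumes "inj \<iota>" "x \<in> hartogs polydisk N_poly \<mu>"
  shows "f_map \<iota> x \<in> hartogs Omega1 N_Omega1 \<mu> \<inter> Omega1_pot_domain \<mu>"
  using assms N_poly_pos
  by (cases x) (auto simp: hartogs_def Omega1_pot_domain_def f_map_def diag_emb_in_Omega1 N_Omega1_diag_emb)

lemma det_rows_cols_mul:
  fixes M :: "'a::comm_ring_1^'m^'m"
  shows "det (\<chi> a c. s a * s c * M $ a $ c) = (\<Prod>a\<in>UNIV. s a) * (\<Prod>a\<in>UNIV. s a) * det M"
proof -
  have "(\<chi> a c. s a * s c * M $ a $ c) = (\<chi> a. s a *s (\<chi> c. s c * M $ a $ c))"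
    by (simp add: vec_eq_iff mult.assoc)
  moreover have "(\<chi> a c. s c * M $ a $ c) = transpose (\<chi> c. s c *s (\<chi> a. M $ a $ c))"
    by (simp add: vec_eq_iff transpose_def)
  moreover have "(\<chi> c a. M $ a $ c) = transpose M"
    by (simp add: vec_eq_iff transpose_def)
  ultimately show ?thesis
    by (simp add: det_rows_mul mult.assoc)
qed

definition reflect :: "'m \<Rightarrow> 'n \<Rightarrow> (complex^'n^'m) \<times> complex \<Rightarrow> (complex^'n^'m) \<times> complex" where
  "reflect i k x =
     ((\<chi> a b. (if a = i then -1 else 1) * (if b = k then -1 else 1) * fst x $ a $ b), snd x)"

lemma linear_reflect: "linear (reflect i k)"
  by (rule linearI) (simp_all add: reflect_def vec_eq_iff algebra_simps scaleR_conv_of_real)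

lemma J_mat_reflect: "J_mat (reflect i k u) = reflect i k (J_mat u)"
  by (simp add: reflect_def J_mat_def vec_eq_iff mult_ac)

lemma N_Omega1_reflect: "N_Omega1 (fst (reflect i k x)) = N_Omega1 (fst x)"
proof -
  define s :: "_ \<Rightarrow> complex" where "s a = (if a = i then -1 else 1)" for a
  define t :: "_ \<Rightarrow> complex" where "t b = (if b = k then -1 else 1)" for b
  define Z where "Z = fst x"
  have s: "s a * s a = 1" "cnj (s a) = s a" for a
    by (simp_all add: s_def)
  have t: "t b * t b = 1" "cnj (t b) = t b" for b
    by (simp_all add: t_def)
  have "(\<Sum>b\<in>UNIV. s a * t b * Z $ a $ b * cnj (s c * t b * Z $ c $ b))
      = s a * s c * (\<Sum>b\<in>UNIV. Z $ a $ b * cnj (Z $ c $ b))" for a c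
  proof -
    have "s a * t b * Z $ a $ b * cnj (s c * t b * Z $ c $ b) =
        s a * s c * (t b * t b) * (Z $ a $ b * cnj (Z $ c $ b))" for b
      using s(2) t(2) by (simp add: mult_ac)
    then have "s a * t b * Z $ a $ b * cnj (s c * t b * Z $ c $ b) =
        s a * s c * (Z $ a $ b * cnj (Z $ c $ b))" for b
      using t(1) by simp
    then show ?thesis
      by (simp only: sum_distrib_left)
  qed
  moreover define M where "M = mat 1 - Z ** conj_transpose Z"
  ultimately have "mat 1 - fst (reflect i k x) ** conj_transpose (fst (reflect i k x)) =
      (\<chi> a c. s a * s c * M $ a $ c)"
    unfolding reflect_def Z_def s_def[symmetric] t_def[symmetric]
    by (auto simp: vec_eq_iff matrix_matrix_mult_def conj_transpose_def mat_def right_diff_distrib s(1))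
  then show ?thesis
    unfolding N_Omega1_def Z_def[symmetric] M_def[symmetric]
    using det_rows_cols_mul[of s M] by (simp add: prod.distrib[symmetric] s(1))
qed

lemma hartogs_pot_reflect: "hartogs_pot N_Omega1 \<mu> (reflect i k x) = hartogs_pot N_Omega1 \<mu> x"
  unfolding hartogs_pot_def N_Omega1_reflect by (simp add: reflect_def)

lemma reflect_f_map: "inj \<iota> \<Longrightarrow> reflect i (\<iota> i) (f_map \<iota> y) = f_map \<iota> y"
  by (auto simp: reflect_def vec_eq_iff f_map_def diag_emb_def inj_eq)

definition diag_part :: "('m \<Rightarrow> 'n) \<Rightarrow> (complex^'n^'m) \<times> complex \<Rightarrow> (complex^'m) \<times> complex" where
  "diag_part \<iota> w = ((\<chi> a. fst w $ a $ \<iota> a), snd w)"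

definition offdiag_row ::
  "('m \<Rightarrow> 'n) \<Rightarrow> 'm \<Rightarrow> (complex^'n^'m) \<times> complex \<Rightarrow> (complex^'n^'m) \<times> complex" where
  "offdiag_row \<iota> i w = ((\<chi> a b. if a = i \<and> b \<noteq> \<iota> a then fst w $ a $ b else 0), 0)"

lemma diag_offdiag_decomposition:
  "w = f_map \<iota> (diag_part \<iota> w) + (\<Sum>i\<in>UNIV. offdiag_row \<iota> i w)"
proof -
  have "(\<Sum>i\<in>UNIV. if a = i \<and> b \<noteq> \<iota> a then fst w $ a $ b else 0) =
      (if b \<noteq> \<iota> a then fst w $ a $ b else 0)" for a b
  proof -
    have "(\<Sum>i\<in>UNIV. if a = i \<and> b \<noteq> \<iota> a then fst w $ a $ b else 0) =
        (\<Sum>i\<in>UNIV. if a = i then (if b \<noteq> \<iota> a then fst w $ a $ b else 0) else 0)"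
      by (rule sum.cong) auto
    then show ?thesis
      by simp
  qed
  then show ?thesis
    by (simp add: prod_eq_iff vec_eq_iff f_map_def diag_emb_def diag_part_def offdiag_row_def
        fst_sum snd_sum)
qed

lemma reflect_offdiag_row: "reflect i (\<iota> i) (offdiag_row \<iota> i w) = - offdiag_row \<iota> i w"
  by (auto simp: reflect_def offdiag_row_def vec_eq_iff)

theorem lemma3p2:
  fixes \<mu> :: real and \<iota> :: "'m::finite \<Rightarrow> 'n::finite"
  assumes "inj \<iota>" and "\<mu> > 0"
  shows "kahler_immersion J_poly (hartogs polydisk N_poly \<mu>) (hartogs_pot N_poly \<mu>)
           J_mat (hartogs Omega1 N_Omega1 \<mu>) (hartogs_pot N_Omega1 \<mu>) (f_map \<iota>)
         \<and> totally_geodesic (hartogs polydisk N_poly \<mu>)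
           J_mat (hartogs Omega1 N_Omega1 \<mu>) (hartogs_pot N_Omega1 \<mu>) (f_map \<iota>)"
  \<comment> \<open>the argument works for every real \<open>\<mu>\<close>\<close>
proof
  have img: "f_map \<iota> ` hartogs polydisk N_poly \<mu> \<subseteq> hartogs Omega1 N_Omega1 \<mu>"
    "f_map \<iota> ` hartogs polydisk N_poly \<mu> \<subseteq> Omega1_pot_domain \<mu>"
    using f_map_hartogs[OF assms(1)] by auto
  show "kahler_immersion J_poly (hartogs polydisk N_poly \<mu>) (hartogs_pot N_poly \<mu>)
      J_mat (hartogs Omega1 N_Omega1 \<mu>) (hartogs_pot N_Omega1 \<mu>) (f_map \<iota>)"
    by (rule kahler_immersion_linear[OF bounded_linear_f_map img(1)])
       (simp_all add: J_mat_f_map hartogs_pot_f_map[OF assms(1)])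
  show "totally_geodesic (hartogs polydisk N_poly \<mu>)
      J_mat (hartogs Omega1 N_Omega1 \<mu>) (hartogs_pot N_Omega1 \<mu>) (f_map \<iota>)"
    by (rule totally_geodesic_by_reflections[OF bounded_linear_f_map img open_Omega1_pot_domain
          Ck_hartogs_pot_Omega1 linear_J_mat finite_class.finite_UNIV, where \<sigma>="\<lambda>i. reflect i (\<iota> i)"
          and P="diag_part \<iota>" and R="offdiag_row \<iota>"])
       (simp_all add: linear_reflect hartogs_pot_reflect J_mat_reflect reflect_f_map[OF assms(1)]
         reflect_offdiag_row flip: diag_offdiag_decomposition)
qed

end
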